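(* Let $X=\{x_1,\dots,x_m\}$ be any $m$-point metric space, let $n\ge m$, and let $\mathbf{r}=(r_1,\dots,r_m)$ be positive integers with $\sum_i r_i=n$. Then there exist a finite metric space $Y$ with points $y_i^\alpha$ ($1\le i\le m$, $1\le\alpha\le r_i$) and the surjection $f\colon Y\to X$, $f(y_i^\alpha)=x_i$ (so $\#f^{-1}(x_i)=r_i$), such that $F_{X,\mathbf{r}}\big(d_Y(y_i^\alpha,y_j^\beta)\big)\neq0$.
   Context: Write $d_{ij}=d_X(x_i,x_j)$ and let $\delta_{ij}$ be the Kronecker delta. The polynomial $F_{X,\mathbf{r}}$ in variables $a=(a_{ij}^{\alpha\beta})$ ($i,j\in\{1,\dots,m\}$, $1\le\alpha\le r_i$, $1\le\beta\le r_j$) is defined as follows. For each choice $(\beta_1,\dots,\beta_m)$ with $1\le\beta_j\le r_j$, let $M^{(\beta_1,\dots,\beta_m)}(a)$ be the $n\times n$ matrix whose rows and columns are indexed by pairs $(i,\alpha)$, $1\le i\le m$, $1\le\alpha\le r_i$, in lexicographic order, with entry in row $(i,\alpha)$ and column $(j,\beta)$ equal to $\delta_{ij}$ if $\beta=\beta_j$, and equal to $e^{-d_{ij}}\,(a_{ij}^{\alpha\beta}-d_{ij})$ if $\beta\neq\beta_j$. Then $F_{X,\mathbf{r}}(a)=\sum_{\beta_1=1}^{r_1}\cdots\sum_{\beta_m=1}^{r_m}\det M^{(\beta_1,\dots,\beta_m)}(a)$. *)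

theory Defs
  imports "HOL-Analysis.Analysis" "HOL-Combinatorics.Permutations"
begin

text \<open>Points of X are indexed 0..<m; points of Y are pairs (i, alpha) with i < m, alpha < r i
  (0-based versions of the paper's indices).\<close>

definition metric_on :: "'a set \<Rightarrow> ('a \<Rightarrow> 'a \<Rightarrow> real) \<Rightarrow> bool" where
  "metric_on S d \<longleftrightarrow>
     (\<forall>x\<in>S. \<forall>y\<in>S. (d x y = 0 \<longleftrightarrow> x = y) \<and> d x y = d y x \<and>
        (\<forall>z\<in>S. d x z \<le> d x y + d y z))"

definition det_on :: "'a set \<Rightarrow> ('a \<Rightarrow> 'a \<Rightarrow> real) \<Rightarrow> real" where
  "det_on I M = (\<Sum>p | p permutes I. of_int (sign p) * (\<Prod>x\<in>I. M x (p x)))"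

definition idx :: "nat \<Rightarrow> (nat \<Rightarrow> nat) \<Rightarrow> (nat \<times> nat) set" where
  "idx m r = {(i, \<alpha>). i < m \<and> \<alpha> < r i}"

definition Mmat :: "(nat \<Rightarrow> nat \<Rightarrow> real) \<Rightarrow> (nat \<Rightarrow> nat)
     \<Rightarrow> ((nat \<times> nat) \<Rightarrow> (nat \<times> nat) \<Rightarrow> real) \<Rightarrow> (nat \<times> nat) \<Rightarrow> (nat \<times> nat) \<Rightarrow> real" where
  "Mmat d b a = (\<lambda>(i, \<alpha>) (j, \<beta>).
      if \<beta> = b j then (if i = j then 1 else 0)
      else exp (- d i j) * (a (i, \<alpha>) (j, \<beta>) - d i j))"

definition F_poly :: "nat \<Rightarrow> (nat \<Rightarrow> nat \<Rightarrow> real) \<Rightarrow> (nat \<Rightarrow> nat)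
     \<Rightarrow> ((nat \<times> nat) \<Rightarrow> (nat \<times> nat) \<Rightarrow> real) \<Rightarrow> real" where
  "F_poly m d r a = (\<Sum>b \<in> PiE {..<m} (\<lambda>j. {..<r j}). det_on (idx m r) (Mmat d b a))"

end

theory Submission imports Defs "Jordan_Normal_Form.Determinant" begin

text \<open>Blow up each point \<open>x\<^sub>i\<close> of \<open>X\<close> into \<open>r\<^sub>i\<close> points at mutual distance \<open>\<epsilon>\<close>, keeping
  the distances of \<open>X\<close> between different fibres; for \<open>0 < \<epsilon> \<le> 2 min d\<^sub>X\<close> this is a metric.
  Then \<open>a - d\<^sub>X\<close> vanishes between different fibres, so every \<open>M\<^bsup>(\<beta>)\<^esup>\<close> is block diagonal.
  In the block of \<open>x\<^sub>i\<close> the column \<open>\<beta>\<^sub>i\<close> consists of ones and the other columns of \<open>\<epsilon>\<close> off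
  the diagonal and \<open>0\<close> on it; subtracting the row \<open>\<beta>\<^sub>i\<close> from the other rows leaves
  \<open>-\<epsilon>\<close> times a unit vector, so the block has determinant \<open>(-\<epsilon>)\<^bsup>r\<^sub>i - 1\<^esup>\<close>. Hence all
  \<open>\<Prod>\<^sub>i r\<^sub>i\<close> summands of \<open>F\<close> equal \<open>\<Prod>\<^sub>i (-\<epsilon>)\<^bsup>r\<^sub>i - 1\<^esup> \<noteq> 0\<close>.\<close>

lemma det_on_eq_det_mat:
  assumes bij: "bij_betw e {0..<n} I"
  shows "det_on I M = det (mat n n (\<lambda>(k, l). M (e k) (e l)))"
proof -
  define e' where "e' = inv_into {0..<n} e"
  have e'e: "e' (e k) = k" if "k < n" for k
    using bij that unfolding e'_def by (simp add: bij_betw_inv_into_left)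
  have ee': "e (e' x) = x" if "x \<in> I" for x
    using bij that unfolding e'_def by (simp add: bij_betw_inv_into_right)
  have eI: "e k \<in> I" if "k < n" for k
    using bij that by (auto simp: bij_betw_def)
  have e'I: "e' x < n" if "x \<in> I" for x
    using bij that unfolding e'_def by (metis atLeastLessThan_iff bij_betw_def inv_into_into)
  have "finite I"
    using bij bij_betw_finite by blast
  define conj_to where "conj_to = (\<lambda>q x. if x \<in> I then e (q (e' x)) else x)"
  define conj_from where "conj_from = (\<lambda>p k. if k \<in> {0..<n} then e' (p (e k)) else k)"
  have "det (mat n n (\<lambda>(k, l). M (e k) (e l))) =
      (\<Sum>q | q permutes {0..<n}. of_int (sign q) * (\<Prod>k=0..<n. M (e k) (e (q k))))"
    by (subst det_def'[of _ n]) (auto intro!: sum.cong prod.cong simp: permutes_in_image)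
  also have "\<dots> = det_on I M"
    unfolding det_on_def
  proof (rule sum.reindex_bij_witness[where j = conj_to and i = conj_from])
    fix q assume "q \<in> {q. q permutes {0..<n}}"
    then have q: "q permutes {0..<n}" by simp
    interpret permutes_bij_finite q "{0..<n}" I e e' "conj_to q"
      by unfold_locales (use q bij e'e in \<open>auto simp: conj_to_def\<close>)
    show "conj_from (conj_to q) = q"
      using q by (auto simp: fun_eq_iff conj_from_def conj_to_def e'e eI permutes_in_image permutes_not_in)
    show "conj_to q \<in> {p. p permutes I}"
      using permutes_p' by simp
    have "(\<Prod>x\<in>I. M x (conj_to q x)) = (\<Prod>k=0..<n. M (e k) (conj_to q (e k)))"
      by (rule prod.reindex_bij_betw[OF bij, symmetric])
    also have "\<dots> = (\<Prod>k=0..<n. M (e k) (e (q k)))"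
      by (rule prod.cong) (auto simp: conj_to_def eI e'e)
    finally show "of_int (sign (conj_to q)) * (\<Prod>x\<in>I. M x (conj_to q x)) =
        of_int (sign q) * (\<Prod>k=0..<n. M (e k) (e (q k)))"
      using sign_p' by simp
  next
    fix p assume "p \<in> {p. p permutes I}"
    then have p: "p permutes I" by simp
    interpret permutes_bij_finite p I "{0..<n}" e' e "conj_from p"
      by unfold_locales
        (use p bij_betw_inv_into[OF bij] ee' \<open>finite I\<close> in \<open>auto simp: conj_from_def e'_def\<close>)
    show "conj_to (conj_from p) = p"
      using p by (auto simp: fun_eq_iff conj_from_def conj_to_def ee' e'I permutes_in_image permutes_not_in)
    show "conj_from p \<in> {q. q permutes {0..<n}}"
      using permutes_p' by simp
  qed
  finally show ?thesis ..
qed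

lemma det_on_cong:
  assumes "\<And>x y. x \<in> I \<Longrightarrow> y \<in> I \<Longrightarrow> M x y = N x y"
  shows "det_on I M = det_on I N"
  unfolding det_on_def
  by (intro sum.cong refl arg_cong2[where f = "(*)"] prod.cong)
     (auto intro!: assms simp: permutes_in_image)

lemma det_on_mult:
  assumes "finite I"
  shows "det_on I (\<lambda>x y. \<Sum>z\<in>I. A x z * B z y) = det_on I A * det_on I B"
proof -
  let ?n = "card I"
  obtain e where bij: "bij_betw e {0..<?n} I"
    using ex_bij_betw_nat_finite[OF assms] by blast
  let ?A = "mat ?n ?n (\<lambda>(k, l). A (e k) (e l))"
  let ?B = "mat ?n ?n (\<lambda>(k, l). B (e k) (e l))"
  have "mat ?n ?n (\<lambda>(k, l). \<Sum>z\<in>I. A (e k) z * B z (e l)) = ?A * ?B"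
  proof (rule eq_matI)
    fix i j assume "i < dim_row (?A * ?B)" "j < dim_col (?A * ?B)"
    then have "i < ?n" "j < ?n" by auto
    moreover have "(\<Sum>z\<in>I. A (e i) z * B z (e j)) = (\<Sum>k=0..<?n. A (e i) (e k) * B (e k) (e j))"
      by (rule sum.reindex_bij_betw[OF bij, symmetric])
    ultimately show "mat ?n ?n (\<lambda>(k, l). \<Sum>z\<in>I. A (e k) z * B z (e l)) $$ (i, j) = (?A * ?B) $$ (i, j)"
      by (simp add: scalar_prod_def row_def col_def)
  qed auto
  then show ?thesis
    by (simp add: det_on_eq_det_mat[OF bij] det_mult[of _ ?n])
qed

text \<open>The matrix is block triangular (rows and columns of \<open>S\<close> first) with diagonal blocks, so only
  the identity permutation contributes.\<close>

lemma det_on_eq_prod_diag: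
  assumes "finite I" and "S \<subseteq> I"
    and diag_S: "\<And>x y. x \<in> S \<Longrightarrow> y \<in> I \<Longrightarrow> y \<noteq> x \<Longrightarrow> M x y = 0"
    and diag_rest: "\<And>x y. x \<in> I - S \<Longrightarrow> y \<in> I - S \<Longrightarrow> y \<noteq> x \<Longrightarrow> M x y = 0"
  shows "det_on I M = (\<Prod>x\<in>I. M x x)"
proof -
  have vanish: "(\<Prod>x\<in>I. M x (p x)) = 0" if p: "p permutes I" "p \<noteq> id" for p
  proof (rule ccontr)
    assume "(\<Prod>x\<in>I. M x (p x)) \<noteq> 0"
    then have nz: "M x (p x) \<noteq> 0" if "x \<in> I" for x
      using \<open>finite I\<close> that by auto
    have pI: "p x \<in> I" if "x \<in> I" for x
      using p(1) that by (simp add: permutes_in_image)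
    have fix_S: "p x = x" if "x \<in> S" for x
      using diag_S[of x "p x"] that pI nz \<open>S \<subseteq> I\<close> by blast
    have fix_rest: "p x = x" if "x \<in> I - S" for x
    proof (cases "p x \<in> S")
      case True
      then have "p (p x) = p x" using fix_S by blast
      then show ?thesis using permutes_inj[OF p(1)] by (auto dest: injD)
    next
      case False
      then show ?thesis using diag_rest[of x "p x"] that pI nz by blast
    qed
    have "p x = x" for x
      using fix_S fix_rest p(1) by (cases "x \<in> I") (auto simp: permutes_not_in)
    with p(2) show False by (simp add: fun_eq_iff)
  qed
  have "det_on I M = (\<Sum>p\<in>{id}. of_int (sign p) * (\<Prod>x\<in>I. M x (p x)))"
    unfolding det_on_def
    by (rule sum.mono_neutral_right) (auto simp: permutes_id finite_permutations[OF \<open>finite I\<close>] vanish)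
  then show ?thesis by simp
qed

lemma det_on_add_rows:
  assumes "finite I" and "P \<subseteq> I" and p: "\<And>x. x \<in> I - P \<Longrightarrow> p x \<in> P"
    and M: "\<And>x y. x \<in> I \<Longrightarrow> y \<in> I \<Longrightarrow> M x y = N x y + (if x \<in> P then 0 else N (p x) y)"
  shows "det_on I M = det_on I N"
proof -
  define E where "E = (\<lambda>x z. (if z = x then 1 else 0) + (if x \<notin> P \<and> z = p x then 1 else 0 :: real))"
  have "(\<Sum>z\<in>I. E x z * N z y) = N x y + (if x \<in> P then 0 else N (p x) y)" if "x \<in> I" for x y
  proof (cases "x \<in> P")
    case False
    with that p have "p x \<in> I" using \<open>P \<subseteq> I\<close> by blast
    with False that \<open>finite I\<close> show ?thesis
      by (simp add: E_def distrib_right sum.distrib if_distrib[of "\<lambda>t. t * _"] sum.delta' cong: if_cong)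
  qed (use that \<open>finite I\<close> in \<open>simp add: E_def if_distrib[of "\<lambda>t. t * _"] sum.delta' cong: if_cong\<close>)
  then have "det_on I M = det_on I (\<lambda>x y. \<Sum>z\<in>I. E x z * N z y)"
    by (intro det_on_cong) (simp add: M)
  also have "\<dots> = det_on I E * det_on I N"
    by (rule det_on_mult[OF \<open>finite I\<close>])
  also have "det_on I E = (\<Prod>x\<in>I. E x x)"
    using p by (intro det_on_eq_prod_diag[OF \<open>finite I\<close> \<open>P \<subseteq> I\<close>]) (auto simp: E_def)
  also have "\<dots> = 1"
  proof (intro prod.neutral ballI)
    fix x assume "x \<in> I"
    then have "x \<notin> P \<Longrightarrow> p x \<noteq> x"
      using p by force
    then show "E x x = 1"
      by (auto simp: E_def)
  qed
  finally show ?thesis by simp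
qed

lemma metric_on_nonneg:
  assumes "metric_on S d" "x \<in> S" "y \<in> S"
  shows "d x y \<ge> 0"
proof -
  have "0 = d x x" "d x x \<le> d x y + d y x" "d y x = d x y"
    using assms unfolding metric_on_def by metis+
  then show ?thesis by linarith
qed

lemma metric_on_pos:
  assumes "metric_on S d" "x \<in> S" "y \<in> S" "x \<noteq> y"
  shows "d x y > 0"
  using metric_on_nonneg[OF assms(1-3)] assms unfolding metric_on_def by force

lemma metric_on_ex_lower_bound:
  assumes "metric_on S d" "finite S"
  obtains \<epsilon> where "\<epsilon> > 0" "\<And>x y. x \<in> S \<Longrightarrow> y \<in> S \<Longrightarrow> x \<noteq> y \<Longrightarrow> \<epsilon> \<le> d x y"
proof
  define D where "D = insert 1 ((\<lambda>(x, y). d x y) ` (S \<times> S - Id))"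
  have "finite D"
    using \<open>finite S\<close> by (simp add: D_def finite_Diff)
  then show "Min D > 0"
    using metric_on_pos[OF assms(1)] by (auto simp: D_def Min_gr_iff)
  show "Min D \<le> d x y" if "x \<in> S" "y \<in> S" "x \<noteq> y" for x y
    using \<open>finite D\<close> that by (intro Min_le) (auto simp: D_def)
qed

definition blowup_metric :: "('a \<Rightarrow> 'a \<Rightarrow> real) \<Rightarrow> real \<Rightarrow> 'a \<times> 'b \<Rightarrow> 'a \<times> 'b \<Rightarrow> real" where
  "blowup_metric d \<epsilon> = (\<lambda>(i, \<alpha>) (j, \<beta>). if i = j then (if \<alpha> = \<beta> then 0 else \<epsilon>) else d i j)"

lemma metric_on_blowup_metric:
  assumes d: "metric_on S d" and "\<epsilon> > 0"
    and \<epsilon>: "\<And>i j. i \<in> S \<Longrightarrow> j \<in> S \<Longrightarrow> i \<noteq> j \<Longrightarrow> \<epsilon> \<le> 2 * d i j"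
  shows "metric_on (Sigma S A) (blowup_metric d \<epsilon>)"
  unfolding metric_on_def
proof (intro ballI conjI)
  fix x y z assume "x \<in> Sigma S A" "y \<in> Sigma S A" "z \<in> Sigma S A"
  then obtain i \<alpha> j \<beta> k \<gamma> where xyz: "x = (i, \<alpha>)" "y = (j, \<beta>)" "z = (k, \<gamma>)"
    and ijk: "i \<in> S" "j \<in> S" "k \<in> S"
    by auto
  have d_ij: "d i j = 0 \<longleftrightarrow> i = j" "d i j = d j i" "d i k \<le> d i j + d j k"
    using d ijk unfolding metric_on_def by blast+
  have "d i j \<ge> 0" "d j k \<ge> 0"
    using metric_on_nonneg[OF d] ijk by auto
  show "(blowup_metric d \<epsilon> x y = 0) = (x = y)" "blowup_metric d \<epsilon> x y = blowup_metric d \<epsilon> y x"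
    using d_ij \<open>\<epsilon> > 0\<close> by (auto simp: xyz blowup_metric_def)
  show "blowup_metric d \<epsilon> x z \<le> blowup_metric d \<epsilon> x y + blowup_metric d \<epsilon> y z"
    using d_ij \<epsilon>[OF ijk(1,2)] \<open>\<epsilon> > 0\<close> \<open>d i j \<ge> 0\<close> \<open>d j k \<ge> 0\<close>
    by (cases "i = j"; cases "j = k"; cases "i = k"; simp add: xyz blowup_metric_def)
qed

lemma Mmat_blowup_metric:
  assumes "dX i i = 0"
  shows "Mmat dX b (blowup_metric dX \<epsilon>) (i, \<alpha>) (j, \<beta>) =
    (if i \<noteq> j then 0 else if \<beta> = b i then 1 else if \<alpha> = \<beta> then 0 else \<epsilon>)"
  using assms by (cases "i = j") (simp_all add: Mmat_def blowup_metric_def)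

lemma idx_eq_Sigma: "idx m r = Sigma {..<m} (\<lambda>i. {..<r i})"
  by (auto simp: idx_def)

lemma det_on_Mmat_blowup_metric:
  assumes dX: "\<And>i. i < m \<Longrightarrow> dX i i = 0" and b: "b \<in> PiE {..<m} (\<lambda>j. {..<r j})"
  shows "det_on (idx m r) (Mmat dX b (blowup_metric dX \<epsilon>)) = (\<Prod>i<m. (- \<epsilon>) ^ (r i - 1))"
proof -
  let ?I = "idx m r" and ?M = "Mmat dX b (blowup_metric dX \<epsilon>)"
  define P where "P = {(i, \<alpha>) \<in> ?I. \<alpha> = b i}"
  define N where "N = (\<lambda>x y. if x \<in> P then ?M x y else if x = y then - \<epsilon> else 0)"
  have fin: "finite ?I"
    by (simp add: idx_eq_Sigma)
  have b_lt: "b i < r i" if "i < m" for i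
    using b that by auto
  have M: "?M (i, \<alpha>) (j, \<beta>) = (if i \<noteq> j then 0 else if \<beta> = b i then 1 else if \<alpha> = \<beta> then 0 else \<epsilon>)"
    if "i < m" for i j \<alpha> \<beta>
    using Mmat_blowup_metric dX that by blast
  have add_pivot_row: "?M x y = N x y + (if x \<in> P then 0 else N (fst x, b (fst x)) y)"
    if "x \<in> ?I" "y \<in> ?I" for x y
    using that b_lt by (cases x; cases y) (simp add: P_def N_def idx_def M)
  have "det_on ?I ?M = det_on ?I N"
    by (rule det_on_add_rows[OF fin _ _ add_pivot_row]) (auto simp: P_def idx_def b_lt)
  also have "\<dots> = (\<Prod>x\<in>?I. N x x)"
    by (rule det_on_eq_prod_diag[OF fin, where S = "?I - P"])
       (auto simp: P_def N_def idx_def M split: if_split_asm)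
  also have "\<dots> = (\<Prod>i<m. \<Prod>\<alpha><r i. N (i, \<alpha>) (i, \<alpha>))"
    by (simp add: idx_eq_Sigma prod.Sigma)
  also have "\<dots> = (\<Prod>i<m. \<Prod>\<alpha><r i. if \<alpha> = b i then 1 else - \<epsilon>)"
    by (intro prod.cong refl) (simp add: P_def N_def idx_def M)
  also have "\<dots> = (\<Prod>i<m. (- \<epsilon>) ^ (r i - 1))"
    using b_lt by (intro prod.cong refl) (simp add: prod.delta_remove)
  finally show ?thesis .
qed

lemma F_poly_blowup_metric:
  assumes "\<And>i. i < m \<Longrightarrow> dX i i = 0"
  shows "F_poly m dX r (blowup_metric dX \<epsilon>) = (\<Prod>i<m. real (r i) * (- \<epsilon>) ^ (r i - 1))"
proof -
  have "F_poly m dX r (blowup_metric dX \<epsilon>) =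
      (\<Sum>b \<in> PiE {..<m} (\<lambda>j. {..<r j}). \<Prod>i<m. (- \<epsilon>) ^ (r i - 1))"
    unfolding F_poly_def using assms by (intro sum.cong refl det_on_Mmat_blowup_metric)
  then show ?thesis
    by (simp add: card_PiE prod.distrib)
qed

theorem proposition4p7:
  fixes m n :: nat and dX :: "nat \<Rightarrow> nat \<Rightarrow> real" and r :: "nat \<Rightarrow> nat"
  assumes "metric_on {..<m} dX"
    and "n \<ge> m"
    and "\<forall>i<m. r i \<ge> 1"
    and "(\<Sum>i<m. r i) = n"
  shows "\<exists>dY :: (nat \<times> nat) \<Rightarrow> (nat \<times> nat) \<Rightarrow> real.
           metric_on (idx m r) dY \<and> F_poly m dX r dY \<noteq> 0"
proof -
  obtain \<epsilon> where "\<epsilon> > 0" and \<epsilon>: "\<And>i j. i < m \<Longrightarrow> j < m \<Longrightarrow> i \<noteq> j \<Longrightarrow> \<epsilon> \<le> dX i j"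
    using metric_on_ex_lower_bound[OF assms(1)] by auto
  moreover have "\<epsilon> \<le> 2 * dX i j" if "i < m" "j < m" "i \<noteq> j" for i j
    using \<epsilon>[OF that] metric_on_pos[OF assms(1)] that by force
  ultimately have "metric_on (idx m r) (blowup_metric dX \<epsilon>)"
    unfolding idx_eq_Sigma by (intro metric_on_blowup_metric[OF assms(1)]) auto
  moreover have "dX i i = 0" if "i < m" for i
    using assms(1) that unfolding metric_on_def by blast
  then have "F_poly m dX r (blowup_metric dX \<epsilon>) \<noteq> 0"
    using assms(3) \<open>\<epsilon> > 0\<close> by (simp add: F_poly_blowup_metric Suc_le_eq)
  ultimately show ?thesis by blast
qed

end
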